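(* Consider the single-hop VAoI system described in the context, operated under the randomized stationary policy with transmission probability $\alpha\in(0,1]$. Then the steady-state probability $\mu_n$ that the VAoI equals $n$ is \[ \mu_n=\begin{cases}\dfrac{\alpha p_s(1-p_g)}{\beta}, & n=0,\\[2mm] \dfrac{\alpha p_s p_g}{\beta^2}, & n=1,\\[2mm] \left[\dfrac{(1-\alpha p_s)p_g}{\beta}\right]^{n-1}\mu_1, & n\ge 2,\end{cases} \] where $\beta=1-(1-\alpha p_s)(1-p_g)$.
   Context: Time is slotted, $t\in\{0,1,2,\dots\}$. An information source generates a new version in each slot independently with probability $p_g$; let $G_t\in\{0,1\}$ indicate whether a new version is generated in slot $t$, so the source version index satisfies $V_S(t+1)=V_S(t)+G_t$. A transmitter always holding the current source version may, in each slot $t$, attempt to send it to a receiver over an erasure channel; $a(t)\in\{0,1\}$ indicates an attempt, and each attempt succeeds independently with probability $p_s$. The Version Age of Information (VAoI) at the receiver is $\Delta(t)=V_S(t)-V_R(t)$, where $V_R(t)$ is the version index stored at the receiver; it evolves as $\Delta(t+1)=G_t$ if $a(t)=1$ and the attempt succeeds, and $\Delta(t+1)=\Delta(t)+G_t$ otherwise. All version-generation and channel events are mutually independent. Assume $0<p_s<1$ and $0<p_g<1$. Under the randomized stationary policy with transmission probability $\alpha$, the actions $a(t)$ are i.i.d. Bernoulli$(\alpha)$, independent of everything else; then $\Delta(t)$ is an ergodic Markov chain on $\{0,1,2,\dots\}$ and $\mu_n$ denotes its stationary probability of state $n$. *)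

theory Defs
  imports "HOL-Probability.Probability_Mass_Function"
begin

text \<open>One-slot transition of the VAoI chain under the randomized stationary policy:
  from VAoI value m, draw the action a ~ Bernoulli(alpha), the channel outcome
  s ~ Bernoulli(p_s) and the generation indicator G ~ Bernoulli(p_g), all independent;
  the next VAoI is G if a = 1 and the attempt succeeds, and m + G otherwise.\<close>
definition vaoi_step :: "real \<Rightarrow> real \<Rightarrow> real \<Rightarrow> nat \<Rightarrow> nat pmf" where
  "vaoi_step \<alpha> ps pg m =
     bind_pmf (bernoulli_pmf \<alpha>) (\<lambda>a.
     bind_pmf (bernoulli_pmf ps) (\<lambda>s.
     bind_pmf (bernoulli_pmf pg) (\<lambda>g.
       return_pmf (if a \<and> s then (if g then 1 else 0) else m + (if g then 1 else 0)))))"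

definition vaoi_stationary :: "real \<Rightarrow> real \<Rightarrow> real \<Rightarrow> nat pmf \<Rightarrow> bool" where
  "vaoi_stationary \<alpha> ps pg \<mu> \<longleftrightarrow> bind_pmf \<mu> (vaoi_step \<alpha> ps pg) = \<mu>"

end

theory Submission imports Defs begin

text \<open>A slot resets the VAoI exactly when a transmission is attempted and succeeds, which
  happens with probability q = alpha * p_s independently of the state. Hence the balance
  equations mu = mu P read
    beta * mu_n = q * [n = 0] (1 - p_g) + q * [n = 1] p_g + (1 - q) p_g mu_(n-1),
  with beta = 1 - (1 - q)(1 - p_g). As beta is nonzero, each mu_n is determined by mu_(n-1),
  so the balance equations have exactly one solution, and the geometric formula is one.\<close>

text \<open>Right-hand side of the balance equation at state n; q stands for alpha * p_s.\<close>
definition vaoi_balance :: "real \<Rightarrow> real \<Rightarrow> (nat \<Rightarrow> real) \<Rightarrow> nat \<Rightarrow> real" where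
  "vaoi_balance q pg f n =
     q * (if n = 0 then 1 - pg else if n = 1 then pg else 0)
     + (1 - q) * ((1 - pg) * f n + pg * (if n = 0 then 0 else f (n - 1)))"

definition vaoi_pmf :: "real \<Rightarrow> real \<Rightarrow> nat \<Rightarrow> real" where
  "vaoi_pmf q pg n =
     (let \<beta> = 1 - (1 - q) * (1 - pg) in
      if n = 0 then q * (1 - pg) / \<beta>
      else ((1 - q) * pg / \<beta>) ^ (n - 1) * (q * pg / \<beta>^2))"

lemma pmf_vaoi_step:
  assumes "0 \<le> \<alpha>" "\<alpha> \<le> 1" "0 \<le> ps" "ps \<le> 1" "0 \<le> pg" "pg \<le> 1"
  shows "pmf (vaoi_step \<alpha> ps pg m) n =
    \<alpha> * ps * (if n = 0 then 1 - pg else if n = 1 then pg else 0)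
    + (1 - \<alpha> * ps) * ((1 - pg) * indicator {n} m + pg * indicator {k. Suc k = n} m)"
  using assms unfolding vaoi_step_def
  by (simp add: pmf_bind indicator_def algebra_simps split: split_indicator)

lemma pmf_bind_vaoi_step:
  assumes "0 \<le> \<alpha>" "\<alpha> \<le> 1" "0 \<le> ps" "ps \<le> 1" "0 \<le> pg" "pg \<le> 1"
  shows "pmf (bind_pmf \<mu> (vaoi_step \<alpha> ps pg)) n = vaoi_balance (\<alpha> * ps) pg (pmf \<mu>) n"
proof -
  let ?c = "\<alpha> * ps * (if n = 0 then 1 - pg else if n = 1 then pg else 0)"
  have "pmf (bind_pmf \<mu> (vaoi_step \<alpha> ps pg)) n = (\<integral>m. ?c
      + ((1 - \<alpha> * ps) * (1 - pg)) * indicator {n} m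
      + ((1 - \<alpha> * ps) * pg) * indicator {k. Suc k = n} m \<partial>measure_pmf \<mu>)"
    unfolding pmf_bind using assms by (simp add: pmf_vaoi_step algebra_simps)
  also have "\<dots> = ?c + ((1 - \<alpha> * ps) * (1 - pg)) * measure \<mu> {n}
      + ((1 - \<alpha> * ps) * pg) * measure \<mu> {k. Suc k = n}"
    by (simp add: measure_pmf.integrable_const_bound[where B = 1])
  finally show ?thesis
    by (cases n) (simp_all add: vaoi_balance_def measure_pmf_single algebra_simps)
qed

lemma vaoi_stationary_iff_balance:
  assumes "0 \<le> \<alpha>" "\<alpha> \<le> 1" "0 \<le> ps" "ps \<le> 1" "0 \<le> pg" "pg \<le> 1"
  shows "vaoi_stationary \<alpha> ps pg \<mu> \<longleftrightarrow> (\<forall>n. pmf \<mu> n = vaoi_balance (\<alpha> * ps) pg (pmf \<mu>) n)"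
  unfolding vaoi_stationary_def pmf_eq_iff pmf_bind_vaoi_step[OF assms] by (auto simp: eq_commute)

lemma vaoi_balance_eq_iff:
  "f n = vaoi_balance q pg f n \<longleftrightarrow>
   (1 - (1 - q) * (1 - pg)) * f n =
     q * (if n = 0 then 1 - pg else if n = 1 then pg else 0)
     + (1 - q) * pg * (if n = 0 then 0 else f (n - 1))"
  unfolding vaoi_balance_def by (auto simp: algebra_simps)

lemma vaoi_balance_fixpoint_unique:
  assumes "(1 - q) * (1 - pg) \<noteq> 1"
    and "\<And>n. f n = vaoi_balance q pg f n" "\<And>n. g n = vaoi_balance q pg g n"
  shows "f n = g n"
proof (induction n rule: less_induct)
  case (less n)
  let ?\<beta> = "1 - (1 - q) * (1 - pg)"
  have "?\<beta> * f n = ?\<beta> * g n"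
    using assms(2,3)[of n] less[of "n - 1"] unfolding vaoi_balance_eq_iff by auto
  then show ?case using assms(1) by simp
qed

lemma vaoi_pmf_balance:
  assumes "(1 - q) * (1 - pg) \<noteq> 1"
  shows "vaoi_pmf q pg n = vaoi_balance q pg (vaoi_pmf q pg) n"
proof -
  define \<beta> where "\<beta> = 1 - (1 - q) * (1 - pg)"
  have "\<beta> \<noteq> 0" using assms unfolding \<beta>_def by simp
  have pmf_simps: "vaoi_pmf q pg 0 = q * (1 - pg) / \<beta>"
    "vaoi_pmf q pg (Suc k) = ((1 - q) * pg / \<beta>) ^ k * (q * pg / \<beta>^2)" for k
    unfolding vaoi_pmf_def \<beta>_def Let_def by simp_all
  consider "n = 0" | "n = 1" | k where "n = Suc (Suc k)"
    by (metis One_nat_def not0_implies_Suc)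
  then have "\<beta> * vaoi_pmf q pg n = q * (if n = 0 then 1 - pg else if n = 1 then pg else 0)
      + (1 - q) * pg * (if n = 0 then 0 else vaoi_pmf q pg (n - 1))"
  proof cases
    case 1
    then show ?thesis using \<open>\<beta> \<noteq> 0\<close> by (simp add: pmf_simps)
  next
    case 2
    have "q * pg + (1 - q) * pg * (q * (1 - pg) / \<beta>) = q * pg * (\<beta> + (1 - q) * (1 - pg)) / \<beta>"
      using \<open>\<beta> \<noteq> 0\<close> by (simp add: field_simps)
    also have "\<dots> = \<beta> * (q * pg / \<beta>^2)"
      using \<open>\<beta> \<noteq> 0\<close> by (simp add: \<beta>_def power2_eq_square)
    finally show ?thesis using 2 by (simp add: pmf_simps)
  next
    case 3
    then show ?thesis using \<open>\<beta> \<noteq> 0\<close>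
      by (simp add: pmf_simps field_simps power2_eq_square)
  qed
  then show ?thesis unfolding vaoi_balance_eq_iff \<beta>_def .
qed

lemma vaoi_balance_fixpoint_iff:
  assumes "(1 - q) * (1 - pg) \<noteq> 1"
  shows "(\<forall>n. f n = vaoi_balance q pg f n) \<longleftrightarrow> f = vaoi_pmf q pg"
  using vaoi_balance_fixpoint_unique[OF assms] vaoi_pmf_balance[OF assms] by blast

theorem proposition1:
  fixes \<alpha> ps pg :: real and \<mu> :: "nat pmf"
  assumes "0 < ps" "ps < 1" "0 < pg" "pg < 1" "0 < \<alpha>" "\<alpha> \<le> 1"
  defines "\<beta> \<equiv> 1 - (1 - \<alpha> * ps) * (1 - pg)"
  shows "vaoi_stationary \<alpha> ps pg \<mu> \<longleftrightarrow>
    (\<forall>n. pmf \<mu> n =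
       (if n = 0 then \<alpha> * ps * (1 - pg) / \<beta>
        else if n = 1 then \<alpha> * ps * pg / \<beta>^2
        else ((1 - \<alpha> * ps) * pg / \<beta>) ^ (n - 1) * (\<alpha> * ps * pg / \<beta>^2)))"
proof -
  have probs: "0 \<le> \<alpha>" "\<alpha> \<le> 1" "0 \<le> ps" "ps \<le> 1" "0 \<le> pg" "pg \<le> 1"
    using assms by simp_all
  have "\<alpha> * ps \<le> 1"
    using assms by (simp add: mult_le_one)
  then have "(1 - \<alpha> * ps) * (1 - pg) \<le> 1 - pg"
    using assms by (simp add: mult_left_le_one_le)
  then have nondegenerate: "(1 - \<alpha> * ps) * (1 - pg) \<noteq> 1"
    using assms by linarith
  have closed_form: "vaoi_pmf (\<alpha> * ps) pg n =
       (if n = 0 then \<alpha> * ps * (1 - pg) / \<beta>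
        else if n = 1 then \<alpha> * ps * pg / \<beta>^2
        else ((1 - \<alpha> * ps) * pg / \<beta>) ^ (n - 1) * (\<alpha> * ps * pg / \<beta>^2))" for n
    unfolding vaoi_pmf_def Let_def \<beta>_def by simp
  have "vaoi_stationary \<alpha> ps pg \<mu> \<longleftrightarrow> pmf \<mu> = vaoi_pmf (\<alpha> * ps) pg"
    unfolding vaoi_stationary_iff_balance[OF probs] vaoi_balance_fixpoint_iff[OF nondegenerate] ..
  then show ?thesis
    unfolding fun_eq_iff closed_form .
qed

end
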